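(* Let $n\ge2$, let $f=(f_1,\dots,f_n):\{-1,1\}^n\to\{-1,1\}^n$ be a bijection, and let $k$ be an integer with $1\le k\le n-1$. Then $\deg(f_i)=1$ for all $i\in[n]$ if and only if for every $S\subset[n]$ with $|S|=k$ there exists $T\subset[n]$ with $|T|=k$ such that: (a) for every $j\in T$, $\mathrm{Inf}_i(f_j)>0$ for at least one $i\in S$; and (b) for every $j\in[n]\setminus T$, $\mathrm{Inf}_i(f_j)=0$ for every $i\in S$.
   Context: For $f:\{-1,1\}^n\to\mathbb{R}$, $f=\sum_{S\subseteq[n]}\hat f(S)\chi_S$ with $\chi_S(x)=\prod_{i\in S}x_i$, and $\deg(f)=\max\{|S|:\hat f(S)\ne0\}$. For $g:\{-1,1\}^n\to\{-1,1\}$ and $i\in[n]$, the influence is $\mathrm{Inf}_i(g):=\Pr_{x\sim U(\{-1,1\}^n)}[g(x)\ne g(x^{\oplus i})]$, where $x^{\oplus i}$ is $x$ with its $i$-th coordinate negated. *)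

theory Defs
  imports Complex_Main
begin

text \<open>The Boolean cube \<open>{-1,1}^n\<close>, coordinates indexed by \<open>{0..<n}\<close>;
  points are functions \<open>nat \<Rightarrow> real\<close> that are 0 outside \<open>{0..<n}\<close>.\<close>
definition cube :: "nat \<Rightarrow> (nat \<Rightarrow> real) set" where
  "cube n = {x. (\<forall>i<n. x i = 1 \<or> x i = -1) \<and> (\<forall>i. n \<le> i \<longrightarrow> x i = 0)}"

definition chi :: "nat set \<Rightarrow> (nat \<Rightarrow> real) \<Rightarrow> real" where
  "chi S x = (\<Prod>i\<in>S. x i)"

definition fcoeff :: "nat \<Rightarrow> ((nat \<Rightarrow> real) \<Rightarrow> real) \<Rightarrow> nat set \<Rightarrow> real" where
  "fcoeff n f S = (\<Sum>x\<in>cube n. f x * chi S x) / 2 ^ n"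

definition fdeg :: "nat \<Rightarrow> ((nat \<Rightarrow> real) \<Rightarrow> real) \<Rightarrow> nat" where
  "fdeg n f = Max ({0} \<union> {card S | S. S \<subseteq> {..<n} \<and> fcoeff n f S \<noteq> 0})"

definition flip :: "nat \<Rightarrow> (nat \<Rightarrow> real) \<Rightarrow> (nat \<Rightarrow> real)" where
  "flip i x = x(i := - x i)"

definition infl :: "nat \<Rightarrow> ((nat \<Rightarrow> real) \<Rightarrow> real) \<Rightarrow> nat \<Rightarrow> real" where
  "infl n g i = real (card {x\<in>cube n. g x \<noteq> g (flip i x)}) / 2 ^ n"

end

theory Submission
  imports Defs
begin

text \<open>Each coordinate \<open>f\<^sub>j\<close> of the bijection is Boolean, and a Boolean function of degree
  at most 1 is \<open>\<plusminus>x\<^sub>i\<close>; so \<open>deg f\<^sub>j = 1\<close> says exactly that \<open>f\<^sub>j\<close> has a unique influential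
  input. Conditions (a) and (b) force \<open>T\<close> to be the set \<open>N(S)\<close> of outputs influenced by
  \<open>S\<close>, so the right-hand side says \<open>|N(S)| = k\<close> for all \<open>k\<close>-sets \<open>S\<close>. Since \<open>f\<close> is a
  bijection, every output is influenced by some input and every input influences some
  output. If every output has a unique source, the source map is a permutation and
  \<open>|N(S)| = |S|\<close>. Conversely, \<open>|N(S)| \<le> k\<close> on \<open>k\<close>-sets propagates down to \<open>|N(S)| \<le> |S|\<close>
  for all smaller \<open>S\<close>; for singletons this says every input influences at most one
  output, and counting shows that no output can then have two sources.\<close>

lemma finite_cube: "finite (cube n)"
proof (rule finite_subset)
  show "cube n \<subseteq> {x. \<forall>i. (i \<in> {..<n} \<longrightarrow> x i \<in> {1, -1}) \<and> (i \<notin> {..<n} \<longrightarrow> x i = 0)}"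
    by (auto simp: cube_def)
qed (intro finite_set_of_finite_funs; simp)

lemma cube_nonempty: "\<exists>x. x \<in> cube n"
  by (rule exI[of _ "\<lambda>i. if i < n then 1 else 0"]) (simp add: cube_def)

lemma cube_coord: "x \<in> cube n \<Longrightarrow> i < n \<Longrightarrow> x i = 1 \<or> x i = -1"
  by (simp add: cube_def)

lemma cube_coord_nonzero: "x \<in> cube n \<Longrightarrow> i < n \<Longrightarrow> x i \<noteq> 0"
  by (auto simp: cube_def)

lemma cube_coord_outside: "x \<in> cube n \<Longrightarrow> n \<le> i \<Longrightarrow> x i = 0"
  by (simp add: cube_def)

lemma flip_in_cube: "x \<in> cube n \<Longrightarrow> i < n \<Longrightarrow> flip i x \<in> cube n"
  by (auto simp: cube_def flip_def)

lemma flip_flip [simp]: "flip i (flip i x) = x"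
  by (simp add: flip_def)

lemma flip_neq: "x \<in> cube n \<Longrightarrow> i < n \<Longrightarrow> flip i x \<noteq> x"
  by (auto simp: flip_def fun_eq_iff dest: cube_coord_nonzero)

lemma chi_flip_mem: "finite S \<Longrightarrow> i \<in> S \<Longrightarrow> chi S (flip i x) = - chi S x"
proof -
  assume "finite S" "i \<in> S"
  moreover have "(\<Prod>j\<in>S - {i}. flip i x j) = (\<Prod>j\<in>S - {i}. x j)"
    by (rule prod.cong) (auto simp: flip_def)
  ultimately show ?thesis
    unfolding chi_def by (simp add: prod.remove flip_def)
qed

lemma chi_flip_not_mem: "i \<notin> S \<Longrightarrow> chi S (flip i x) = chi S x"
  unfolding chi_def by (rule prod.cong) (auto simp: flip_def)

lemma sum_chi_mult_chi:
  assumes x: "x \<in> cube n" and y: "y \<in> cube n"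
  shows "(\<Sum>S\<in>Pow {..<n}. chi S y * chi S x) = (if y = x then 2 ^ n else 0)"
proof -
  have "(\<Sum>S\<in>Pow {..<n}. chi S y * chi S x) = (\<Prod>i<n. y i * x i + 1)"
    by (simp add: prod_add chi_def prod.distrib)
  also have "\<dots> = (if y = x then 2 ^ n else 0)"
  proof (cases "y = x")
    case True
    have "(\<Prod>i<n. y i * x i + 1) = (\<Prod>i<n. 2)"
      using True cube_coord[OF x] by (intro prod.cong) fastforce+
    then show ?thesis using True by simp
  next
    case False
    then obtain i where "y i \<noteq> x i" by blast
    moreover have "i < n" using calculation cube_coord_outside[OF x] cube_coord_outside[OF y]
      by (metis not_le)
    ultimately have "y i * x i + 1 = 0" using cube_coord[OF x] cube_coord[OF y] by force
    with \<open>i < n\<close> False show ?thesis by (auto intro: prod_zero)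
  qed
  finally show ?thesis .
qed

lemma fourier_expansion:
  assumes x: "x \<in> cube n"
  shows "g x = (\<Sum>S\<in>Pow {..<n}. fcoeff n g S * chi S x)"
proof -
  have "(\<Sum>S\<in>Pow {..<n}. fcoeff n g S * chi S x)
      = (\<Sum>y\<in>cube n. g y * (\<Sum>S\<in>Pow {..<n}. chi S y * chi S x)) / 2 ^ n"
    by (simp add: fcoeff_def sum_divide_distrib sum_distrib_left sum_distrib_right
        mult.assoc sum.swap[of _ "Pow {..<n}"])
  also have "\<dots> = (\<Sum>y\<in>cube n. if y = x then g x * 2 ^ n else 0) / 2 ^ n"
    by (intro arg_cong[where f = "\<lambda>s. s / 2 ^ n"] sum.cong) (simp_all add: sum_chi_mult_chi[OF x])
  also have "\<dots> = g x" using x finite_cube by simp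
  finally show ?thesis ..
qed

lemma infl_nonneg: "0 \<le> infl n g i"
  by (simp add: infl_def)

lemma infl_eq_0_iff_not_pos: "infl n g i = 0 \<longleftrightarrow> \<not> 0 < infl n g i"
  using infl_nonneg[of n g i] by linarith

lemma infl_eq_0_iff: "infl n g i = 0 \<longleftrightarrow> (\<forall>x\<in>cube n. g (flip i x) = g x)"
  using finite_cube[of n] by (auto simp: infl_def)

lemma infl_pos_iff: "0 < infl n g i \<longleftrightarrow> (\<exists>x\<in>cube n. g (flip i x) \<noteq> g x)"
  using infl_eq_0_iff_not_pos[of n g i] infl_eq_0_iff[of n g i] by auto

lemma flip_difference:
  assumes x: "x \<in> cube n" and i: "i < n"
  shows "g x - g (flip i x) = 2 * (\<Sum>S | S \<subseteq> {..<n} \<and> i \<in> S. fcoeff n g S * chi S x)"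
proof -
  have "g x - g (flip i x) = (\<Sum>S\<in>Pow {..<n}. fcoeff n g S * (chi S x - chi S (flip i x)))"
    by (simp add: fourier_expansion[OF x, of g] fourier_expansion[OF flip_in_cube[OF x i], of g]
        sum_subtractf right_diff_distrib)
  also have "\<dots> = (\<Sum>S\<in>Pow {..<n}. if i \<in> S then 2 * (fcoeff n g S * chi S x) else 0)"
    by (intro sum.cong) (auto simp: chi_flip_mem chi_flip_not_mem finite_subset)
  also have "\<dots> = 2 * (\<Sum>S | S \<subseteq> {..<n} \<and> i \<in> S. fcoeff n g S * chi S x)"
    by (simp add: sum.inter_filter[symmetric] sum_distrib_left Int_def conj_commute)
  finally show ?thesis .
qed

lemma fcoeff_eq_0_if_flip_invariant:
  assumes i: "i < n" and inv: "\<forall>x\<in>cube n. g (flip i x) = g x"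
    and S: "S \<subseteq> {..<n}" "i \<in> S"
  shows "fcoeff n g S = 0"
proof -
  have "finite S" using finite_subset[OF S(1)] by simp
  have "(\<Sum>x\<in>cube n. g x * chi S x) = (\<Sum>x\<in>cube n. - (g x * chi S x))"
    by (rule sum.reindex_bij_witness[of _ "flip i" "flip i"])
       (auto simp: flip_in_cube i inv chi_flip_mem[OF \<open>finite S\<close> S(2)])
  then show ?thesis by (simp add: fcoeff_def sum_negf)
qed

lemma infl_eq_0_iff_fcoeff:
  assumes i: "i < n"
  shows "infl n g i = 0 \<longleftrightarrow> (\<forall>S\<subseteq>{..<n}. i \<in> S \<longrightarrow> fcoeff n g S = 0)"
proof
  assume "infl n g i = 0"
  then show "\<forall>S\<subseteq>{..<n}. i \<in> S \<longrightarrow> fcoeff n g S = 0"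
    by (auto simp: infl_eq_0_iff intro: fcoeff_eq_0_if_flip_invariant[OF i])
next
  assume "\<forall>S\<subseteq>{..<n}. i \<in> S \<longrightarrow> fcoeff n g S = 0"
  then have "g x - g (flip i x) = 0" if "x \<in> cube n" for x
    by (simp add: flip_difference[OF that i])
  then show "infl n g i = 0" by (simp add: infl_eq_0_iff)
qed

lemma constant_if_no_influence:
  assumes "\<forall>i<n. infl n g i = 0" and x: "x \<in> cube n" and y: "y \<in> cube n"
  shows "g x = g y"
proof -
  have coeff: "fcoeff n g S = 0" if "S \<subseteq> {..<n}" "S \<noteq> {}" for S
    using that assms(1) infl_eq_0_iff_fcoeff by blast
  have "g z = fcoeff n g {}" if "z \<in> cube n" for z
  proof -
    have "g z = (\<Sum>S\<in>{{}}. fcoeff n g S * chi S z)"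
      by (subst fourier_expansion[OF that], rule sum.mono_neutral_right) (auto simp: coeff)
    then show ?thesis by (simp add: chi_def)
  qed
  then show ?thesis using x y by simp
qed

lemma finite_fdeg_degrees: "finite {card S | S. S \<subseteq> {..<n} \<and> fcoeff n g S \<noteq> 0}"
  by (rule finite_subset[of _ "card ` Pow {..<n}"]) auto

lemma fdeg_le_iff: "fdeg n g \<le> d \<longleftrightarrow> (\<forall>S\<subseteq>{..<n}. fcoeff n g S \<noteq> 0 \<longrightarrow> card S \<le> d)"
  using finite_fdeg_degrees[of n g] by (auto simp: fdeg_def)

lemma le_fdeg_iff:
  assumes "0 < d"
  shows "d \<le> fdeg n g \<longleftrightarrow> (\<exists>S\<subseteq>{..<n}. fcoeff n g S \<noteq> 0 \<and> d \<le> card S)"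
  using finite_fdeg_degrees[of n g] assms by (auto simp: fdeg_def Max_ge_iff)

lemma flip_difference_fdeg_le_1:
  assumes deg: "fdeg n g \<le> 1" and x: "x \<in> cube n" and i: "i < n"
  shows "g x - g (flip i x) = 2 * fcoeff n g {i} * x i"
proof -
  have "fcoeff n g S = 0" if S: "S \<subseteq> {..<n}" "i \<in> S" "S \<noteq> {i}" for S
  proof (rule ccontr)
    assume "fcoeff n g S \<noteq> 0"
    then have "card S \<le> Suc 0" using deg S(1) by (simp add: fdeg_le_iff)
    then have "\<forall>a\<in>S. \<forall>b\<in>S. a = b" using finite_subset[OF S(1)] by (simp add: card_le_Suc0_iff_eq)
    then show False using S(2,3) by blast
  qed
  then have "(\<Sum>S | S \<subseteq> {..<n} \<and> i \<in> S. fcoeff n g S * chi S x) = (\<Sum>S\<in>{{i}}. fcoeff n g S * chi S x)"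
    using i by (intro sum.mono_neutral_right) auto
  then show ?thesis by (simp add: flip_difference[OF x i] chi_def)
qed

lemma infl_pos_iff_fcoeff_singleton:
  assumes deg: "fdeg n g \<le> 1" and i: "i < n"
  shows "0 < infl n g i \<longleftrightarrow> fcoeff n g {i} \<noteq> 0"
proof -
  obtain x where x: "x \<in> cube n" using cube_nonempty by blast
  have "g (flip i y) \<noteq> g y \<longleftrightarrow> fcoeff n g {i} \<noteq> 0" if "y \<in> cube n" for y
    using flip_difference_fdeg_le_1[OF deg that i] cube_coord_nonzero[OF that i] by auto
  then show ?thesis using x by (auto simp: infl_pos_iff)
qed

lemma boolean_fdeg_le_1_is_dictator:
  assumes bool: "g ` cube n \<subseteq> {1, -1}" and deg: "fdeg n g \<le> 1"
    and i: "i < n" and coeff: "fcoeff n g {i} \<noteq> 0" and x: "x \<in> cube n"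
  shows "g x = fcoeff n g {i} * x i"
proof -
  have diff: "g x - g (flip i x) = 2 * fcoeff n g {i} * x i"
    by (rule flip_difference_fdeg_le_1[OF deg x i])
  then have "g (flip i x) \<noteq> g x" using coeff cube_coord_nonzero[OF x i] by auto
  moreover have "g x \<in> {1, -1}" "g (flip i x) \<in> {1, -1}" using bool x flip_in_cube[OF x i] by auto
  ultimately have "g (flip i x) = - g x" by auto
  then show ?thesis using diff by simp
qed

lemma boolean_fdeg_le_1_unique_coordinate:
  assumes bool: "g ` cube n \<subseteq> {1, -1}" and deg: "fdeg n g \<le> 1"
    and i: "i < n" "fcoeff n g {i} \<noteq> 0" and l: "l < n" "fcoeff n g {l} \<noteq> 0"
  shows "i = l"
proof (rule ccontr)
  assume "i \<noteq> l"
  obtain x where x: "x \<in> cube n" using cube_nonempty by blast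
  note dictator = boolean_fdeg_le_1_is_dictator[OF bool deg]
  have "g (flip l x) = g x"
    using dictator[OF i x] dictator[OF i flip_in_cube[OF x l(1)]] \<open>i \<noteq> l\<close> by (simp add: flip_def)
  moreover have "g (flip l x) = - g x"
    using dictator[OF l x] dictator[OF l flip_in_cube[OF x l(1)]] by (simp add: flip_def)
  ultimately have "g x = 0" by simp
  then show False using bool x by auto
qed

lemma fdeg_eq_1_iff_unique_influential:
  assumes bool: "g ` cube n \<subseteq> {1, -1}"
  shows "fdeg n g = 1 \<longleftrightarrow> (\<exists>!i. i < n \<and> 0 < infl n g i)"
proof
  assume deg1: "fdeg n g = 1"
  then have deg: "fdeg n g \<le> 1" by simp
  obtain S where S: "S \<subseteq> {..<n}" "fcoeff n g S \<noteq> 0" "1 \<le> card S"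
    using deg1 le_fdeg_iff[of 1 n g] by auto
  moreover have "card S \<le> 1" using deg S(1,2) by (simp add: fdeg_le_iff)
  ultimately have "card S = 1" by simp
  then obtain i where "S = {i}" by (auto simp: card_Suc_eq)
  then have i: "i < n" "fcoeff n g {i} \<noteq> 0" using S by auto
  show "\<exists>!i. i < n \<and> 0 < infl n g i"
    using i boolean_fdeg_le_1_unique_coordinate[OF bool deg i]
      infl_pos_iff_fcoeff_singleton[OF deg] by blast
next
  assume "\<exists>!i. i < n \<and> 0 < infl n g i"
  then obtain i where i: "i < n" "0 < infl n g i"
    and others: "\<And>l. l < n \<Longrightarrow> l \<noteq> i \<Longrightarrow> infl n g l = 0"
    by (metis infl_eq_0_iff_not_pos)
  have support: "S \<subseteq> {i}" if S: "S \<subseteq> {..<n}" "fcoeff n g S \<noteq> 0" for S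
  proof (rule ccontr)
    assume "\<not> S \<subseteq> {i}"
    then obtain l where l: "l \<in> S" "l \<noteq> i" by blast
    then have "infl n g l = 0" using S(1) others by blast
    then show False using infl_eq_0_iff_fcoeff[of l n g] S l(1) by blast
  qed
  have "card S \<le> 1" if "S \<subseteq> {..<n}" "fcoeff n g S \<noteq> 0" for S
    using card_mono[OF _ support[OF that]] by simp
  then have le: "fdeg n g \<le> 1" by (simp add: fdeg_le_iff)
  obtain S where S: "S \<subseteq> {..<n}" "i \<in> S" "fcoeff n g S \<noteq> 0"
    using i(2) infl_eq_0_iff_fcoeff[OF i(1), of g] by fastforce
  have "0 < card S" using S(2) finite_subset[OF S(1)] card_gt_0_iff by blast
  then have "1 \<le> fdeg n g" using le_fdeg_iff[of 1 n g] S(1,3) by auto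
  with le show "fdeg n g = 1" by simp
qed

lemma bij_cube_output_has_influential_input:
  assumes bij: "bij_betw F (cube n) (cube n)" and j: "j < n"
  shows "\<exists>i<n. 0 < infl n (\<lambda>x. F x j) i"
proof (rule ccontr)
  assume "\<not> (\<exists>i<n. 0 < infl n (\<lambda>x. F x j) i)"
  then have no_infl: "\<forall>i<n. infl n (\<lambda>x. F x j) i = 0"
    by (simp add: infl_eq_0_iff_not_pos)
  obtain x where x: "x \<in> cube n" using cube_nonempty by blast
  have onto: "F ` cube n = cube n" using bij by (rule bij_betw_imp_surj_on)
  obtain a b where "a \<in> cube n" "F a = x" "b \<in> cube n" "F b = flip j x"
    using x flip_in_cube[OF x j] by (metis imageE onto)
  then have "x j = flip j x j"
    using constant_if_no_influence[OF no_infl] by metis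
  then show False using cube_coord_nonzero[OF x j] by (simp add: flip_def)
qed

lemma bij_cube_input_influences_output:
  assumes bij: "bij_betw F (cube n) (cube n)" and i: "i < n"
  shows "\<exists>j<n. 0 < infl n (\<lambda>x. F x j) i"
proof (rule ccontr)
  assume "\<not> (\<exists>j<n. 0 < infl n (\<lambda>x. F x j) i)"
  then have no_infl: "\<forall>j<n. infl n (\<lambda>x. F x j) i = 0"
    by (simp add: infl_eq_0_iff_not_pos)
  obtain x where x: "x \<in> cube n" using cube_nonempty by blast
  have x': "flip i x \<in> cube n" using flip_in_cube[OF x i] .
  have "F (flip i x) j = F x j" for j
  proof (cases "j < n")
    case True
    then show ?thesis using no_infl x by (simp add: infl_eq_0_iff)
  next
    case False
    then show ?thesis
      using bij_betwE[OF bij] x x' cube_coord_outside by (metis not_le)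
  qed
  then have "flip i x = x"
    using bij x x' by (metis bij_betw_def inj_onD ext)
  then show False using flip_neq[OF x i] by simp
qed

definition out_nbhd :: "nat \<Rightarrow> (nat \<Rightarrow> nat \<Rightarrow> bool) \<Rightarrow> nat set \<Rightarrow> nat set" where
  "out_nbhd n D S = {j. j < n \<and> (\<exists>i\<in>S. D i j)}"

lemma out_nbhd_subset: "out_nbhd n D S \<subseteq> {..<n}"
  by (auto simp: out_nbhd_def)

lemma finite_out_nbhd: "finite (out_nbhd n D S)"
  by (rule finite_subset[OF out_nbhd_subset]) simp

lemma out_nbhd_mono: "S \<subseteq> S' \<Longrightarrow> out_nbhd n D S \<subseteq> out_nbhd n D S'"
  by (auto simp: out_nbhd_def)

lemma ex_exact_out_set_iff_card_out_nbhd: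
  "(\<exists>T. T \<subseteq> {..<n} \<and> card T = k \<and> (\<forall>j\<in>T. \<exists>i\<in>S. D i j) \<and> (\<forall>j\<in>{..<n} - T. \<forall>i\<in>S. \<not> D i j))
    \<longleftrightarrow> card (out_nbhd n D S) = k"
proof
  assume "\<exists>T. T \<subseteq> {..<n} \<and> card T = k \<and> (\<forall>j\<in>T. \<exists>i\<in>S. D i j) \<and> (\<forall>j\<in>{..<n} - T. \<forall>i\<in>S. \<not> D i j)"
  then obtain T where "T \<subseteq> {..<n}" "card T = k" "\<forall>j\<in>T. \<exists>i\<in>S. D i j" "\<forall>j\<in>{..<n} - T. \<forall>i\<in>S. \<not> D i j"
    by blast
  moreover from this have "T = out_nbhd n D S" by (auto simp: out_nbhd_def)
  ultimately show "card (out_nbhd n D S) = k" by simp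
next
  assume "card (out_nbhd n D S) = k"
  then show "\<exists>T. T \<subseteq> {..<n} \<and> card T = k \<and> (\<forall>j\<in>T. \<exists>i\<in>S. D i j) \<and> (\<forall>j\<in>{..<n} - T. \<forall>i\<in>S. \<not> D i j)"
    by (intro exI[of _ "out_nbhd n D S"]) (auto simp: out_nbhd_def)
qed

lemma card_out_nbhd_eq_card:
  assumes unique: "\<forall>j<n. \<exists>!i. i < n \<and> D i j" and onto: "\<forall>i<n. \<exists>j<n. D i j"
    and S: "S \<subseteq> {..<n}"
  shows "card (out_nbhd n D S) = card S"
proof -
  define \<sigma> where "\<sigma> j = (THE i. i < n \<and> D i j)" for j
  have \<sigma>: "\<sigma> j < n" "D (\<sigma> j) j" if "j < n" for j
    using theI'[OF unique[rule_format, OF that]] by (simp_all add: \<sigma>_def)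
  have \<sigma>_unique: "\<sigma> j = i" if "j < n" "i < n" "D i j" for i j
    using the1_equality[OF unique[rule_format, OF that(1)]] that by (simp add: \<sigma>_def)
  have preimage: "i \<in> \<sigma> ` {j \<in> {..<n}. \<sigma> j \<in> A}" if i: "i < n" "i \<in> A" for i A
  proof -
    obtain j where "j < n" "D i j" using onto i(1) by blast
    then show ?thesis using \<sigma>_unique i by force
  qed
  have "\<sigma> ` {..<n} = {..<n}"
    using \<sigma>(1) preimage[where A = "{..<n}"] by auto
  then have inj: "inj_on \<sigma> {..<n}" by (simp add: eq_card_imp_inj_on)
  have nbhd: "out_nbhd n D S = {j \<in> {..<n}. \<sigma> j \<in> S}"
    using \<sigma> \<sigma>_unique S by (auto simp: out_nbhd_def)
  have "\<sigma> ` out_nbhd n D S = S"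
    using nbhd preimage[where A = S] S by auto
  moreover have "inj_on \<sigma> (out_nbhd n D S)"
    using inj_on_subset[OF inj out_nbhd_subset] .
  ultimately show ?thesis using card_image by metis
qed

text \<open>If some \<open>m\<close>-set had more than \<open>m\<close> out-neighbours, adding any further
  element would not enlarge its neighbourhood, so the neighbourhood would be everything.\<close>
lemma card_out_nbhd_le_step:
  assumes mn: "Suc m < n" and cover: "\<forall>j<n. \<exists>i<n. D i j"
    and bound: "\<forall>S'\<subseteq>{..<n}. card S' = Suc m \<longrightarrow> card (out_nbhd n D S') \<le> Suc m"
    and S: "S \<subseteq> {..<n}" "card S = m"
  shows "card (out_nbhd n D S) \<le> m"
proof (rule ccontr)
  assume "\<not> card (out_nbhd n D S) \<le> m"
  then have big: "Suc m \<le> card (out_nbhd n D S)" by simp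
  have finS: "finite S" using finite_subset[OF S(1)] by simp
  have same: "out_nbhd n D (insert c S) = out_nbhd n D S" if c: "c < n" "c \<notin> S" for c
  proof -
    have "insert c S \<subseteq> {..<n}" "card (insert c S) = Suc m" using c S finS by auto
    then have le: "card (out_nbhd n D (insert c S)) \<le> Suc m" by (simp add: bound)
    have sub: "out_nbhd n D S \<subseteq> out_nbhd n D (insert c S)" by (rule out_nbhd_mono) blast
    from le big have "card (out_nbhd n D (insert c S)) \<le> card (out_nbhd n D S)" by linarith
    then show ?thesis using card_seteq[OF finite_out_nbhd sub] by simp
  qed
  have "{..<n} \<subseteq> out_nbhd n D S"
  proof
    fix j assume j: "j \<in> {..<n}"
    then obtain i where i: "i < n" "D i j" using cover by blast
    then have "j \<in> out_nbhd n D (insert i S)" using j by (auto simp: out_nbhd_def)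
    then show "j \<in> out_nbhd n D S" using same[OF i(1)] by (cases "i \<in> S") (simp_all add: insert_absorb)
  qed
  then have "card {..<n} \<le> card (out_nbhd n D S)" by (rule card_mono[OF finite_out_nbhd])
  then have all: "n \<le> card (out_nbhd n D S)" by simp
  have "\<not> card {..<n} \<le> card S" using S(2) mn by simp
  then obtain c where c: "c < n" "c \<notin> S" using card_mono[OF finS] by blast
  then have "insert c S \<subseteq> {..<n}" "card (insert c S) = Suc m" using S finS by auto
  then have "card (out_nbhd n D (insert c S)) \<le> Suc m" by (simp add: bound)
  then show False using all mn by (simp add: same[OF c])
qed

lemma card_out_nbhd_le_card_downward:
  assumes "k < n" and cover: "\<forall>j<n. \<exists>i<n. D i j"
    and bound: "\<forall>S\<subseteq>{..<n}. card S = k \<longrightarrow> card (out_nbhd n D S) \<le> k"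
    and "m \<le> k"
  shows "\<forall>S\<subseteq>{..<n}. card S = m \<longrightarrow> card (out_nbhd n D S) \<le> m"
  using \<open>m \<le> k\<close>
proof (induction m rule: inc_induct)
  case base
  then show ?case by (rule bound)
next
  case (step m)
  then show ?case using card_out_nbhd_le_step[OF _ cover] \<open>k < n\<close> by simp
qed

lemma unique_source_if_card_out_nbhd_le:
  assumes "1 \<le> k" "k < n" and cover: "\<forall>j<n. \<exists>i<n. D i j"
    and bound: "\<forall>S\<subseteq>{..<n}. card S = k \<longrightarrow> card (out_nbhd n D S) \<le> k"
  shows "\<forall>j<n. \<exists>!i. i < n \<and> D i j"
proof (intro allI impI)
  fix j assume j: "j < n"
  have single: "card (out_nbhd n D {i}) \<le> 1" if "i < n" for i
    using card_out_nbhd_le_card_downward[OF \<open>k < n\<close> cover bound \<open>1 \<le> k\<close>] that by simp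
  have "i1 = i2" if i1: "i1 < n" "D i1 j" and i2: "i2 < n" "D i2 j" for i1 i2
  proof (rule ccontr)
    assume "i1 \<noteq> i2"
    have "j \<in> out_nbhd n D {i2}" using i2 j by (simp add: out_nbhd_def)
    then have nbhd_i2: "out_nbhd n D {i2} = {j}"
      using single[OF i2(1)] card_le_Suc0_iff_eq[OF finite_out_nbhd, of n D "{i2}"] by auto
    have cover_without_i2: "{..<n} \<subseteq> (\<Union>i\<in>{..<n} - {i2}. out_nbhd n D {i})"
    proof
      fix j' assume j': "j' \<in> {..<n}"
      then obtain i where i: "i < n" "D i j'" using cover by blast
      then have "j' \<in> out_nbhd n D {i}" using j' by (simp add: out_nbhd_def)
      moreover have "j \<in> out_nbhd n D {i1}" using i1 j by (simp add: out_nbhd_def)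
      ultimately show "j' \<in> (\<Union>i\<in>{..<n} - {i2}. out_nbhd n D {i})"
        using nbhd_i2 i(1) i1(1) \<open>i1 \<noteq> i2\<close> by (cases "i = i2") auto
    qed
    then have "n \<le> card (\<Union>i\<in>{..<n} - {i2}. out_nbhd n D {i})"
      using card_mono[OF _ cover_without_i2] by (simp add: finite_out_nbhd)
    also have "\<dots> \<le> (\<Sum>i\<in>{..<n} - {i2}. card (out_nbhd n D {i}))" by (rule card_UN_le) simp
    also have "\<dots> \<le> (\<Sum>i\<in>{..<n} - {i2}. 1)" by (rule sum_mono) (use single in auto)
    also have "\<dots> = n - 1" using i2 by simp
    finally show False using \<open>k < n\<close> by simp
  qed
  then show "\<exists>!i. i < n \<and> D i j" using cover j by blast
qed

lemma unique_source_iff_card_out_nbhd: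
  assumes "1 \<le> k" "k < n"
    and cover: "\<forall>j<n. \<exists>i<n. D i j" and onto: "\<forall>i<n. \<exists>j<n. D i j"
  shows "(\<forall>j<n. \<exists>!i. i < n \<and> D i j) \<longleftrightarrow>
    (\<forall>S. S \<subseteq> {..<n} \<and> card S = k \<longrightarrow> card (out_nbhd n D S) = k)"
proof
  assume "\<forall>j<n. \<exists>!i. i < n \<and> D i j"
  then show "\<forall>S. S \<subseteq> {..<n} \<and> card S = k \<longrightarrow> card (out_nbhd n D S) = k"
    using card_out_nbhd_eq_card[OF _ onto] by simp
next
  assume "\<forall>S. S \<subseteq> {..<n} \<and> card S = k \<longrightarrow> card (out_nbhd n D S) = k"
  then have "\<forall>S\<subseteq>{..<n}. card S = k \<longrightarrow> card (out_nbhd n D S) \<le> k" by simp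
  then show "\<forall>j<n. \<exists>!i. i < n \<and> D i j"
    by (rule unique_source_if_card_out_nbhd_le[OF assms(1,2) cover])
qed

theorem mainTheorem9:
  fixes n k :: nat and F :: "(nat \<Rightarrow> real) \<Rightarrow> (nat \<Rightarrow> real)"
  assumes "n \<ge> 2" and "bij_betw F (cube n) (cube n)" and "1 \<le> k" and "k \<le> n - 1"
  shows "(\<forall>i<n. fdeg n (\<lambda>x. F x i) = 1) \<longleftrightarrow>
    (\<forall>S. S \<subseteq> {..<n} \<and> card S = k \<longrightarrow>
      (\<exists>T. T \<subseteq> {..<n} \<and> card T = k \<and>
        (\<forall>j\<in>T. \<exists>i\<in>S. infl n (\<lambda>x. F x j) i > 0) \<and>
        (\<forall>j\<in>{..<n} - T. \<forall>i\<in>S. infl n (\<lambda>x. F x j) i = 0)))"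
proof -
  define D where "D i j \<longleftrightarrow> 0 < infl n (\<lambda>x. F x j) i" for i j
  have boolean: "(\<lambda>x. F x j) ` cube n \<subseteq> {1, -1}" if "j < n" for j
    using bij_betwE[OF assms(2)] cube_coord that by blast
  have "(\<forall>j<n. fdeg n (\<lambda>x. F x j) = 1) \<longleftrightarrow> (\<forall>j<n. \<exists>!i. i < n \<and> D i j)"
    using fdeg_eq_1_iff_unique_influential[OF boolean] by (simp add: D_def)
  also have "\<dots> \<longleftrightarrow> (\<forall>S. S \<subseteq> {..<n} \<and> card S = k \<longrightarrow> card (out_nbhd n D S) = k)"
    using assms bij_cube_output_has_influential_input bij_cube_input_influences_output
    by (intro unique_source_iff_card_out_nbhd) (auto simp: D_def)
  also have "\<dots> \<longleftrightarrow> (\<forall>S. S \<subseteq> {..<n} \<and> card S = k \<longrightarrow>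
      (\<exists>T. T \<subseteq> {..<n} \<and> card T = k \<and>
        (\<forall>j\<in>T. \<exists>i\<in>S. infl n (\<lambda>x. F x j) i > 0) \<and>
        (\<forall>j\<in>{..<n} - T. \<forall>i\<in>S. infl n (\<lambda>x. F x j) i = 0)))"
    by (simp add: ex_exact_out_set_iff_card_out_nbhd[symmetric] D_def infl_eq_0_iff_not_pos)
  finally show ?thesis .
qed

end
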